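(* For every ranking $R\in\mathcal{R}$ there exists a matrix $W\in\mathbb{R}^{m\times n}_{\ge0}$ such that for every ranking $R'\in\mathcal{R}$ with $R'\ne R$, $\langle R',W\rangle\le\langle R,W\rangle\cdot(1-\frac1n)$.
   Context: $\mathcal{R}$ is the set of rankings: matrices $R\in\{0,1\}^{m\times n}$ with $\sum_{j=1}^n R_{ij}\le 1$ for every item $i\in[m]$ and $\sum_{i=1}^m R_{ij}=1$ for every position $j\in[n]$; $\langle R,W\rangle=\sum_{i,j}R_{ij}W_{ij}$. *)

theory Defs
  imports "HOL-Analysis.Analysis"
begin

text \<open>Matrices in R^{m x n} are rendered as real^'n^'m (rows indexed by the finite
type 'm of items, columns by the finite type 'n of positions).\<close>

definition rankings :: "(real^'n::finite^'m::finite) set" where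
  "rankings = {R. (\<forall>i j. R$i$j \<in> {0, 1}) \<and>
                  (\<forall>i. (\<Sum>j\<in>UNIV. R$i$j) \<le> 1) \<and>
                  (\<forall>j. (\<Sum>i\<in>UNIV. R$i$j) = 1)}"

definition mat_inner :: "real^'n::finite^'m::finite \<Rightarrow> real^'n^'m \<Rightarrow> real" where
  "mat_inner R W = (\<Sum>i\<in>UNIV. \<Sum>j\<in>UNIV. R$i$j * W$i$j)"

end

theory Submission
  imports Defs
begin

text \<open>Take \<open>W = R\<close>. Every column of a ranking is a standard unit vector, so
  \<open>\<langle>R', R\<rangle>\<close> counts the positions at which \<open>R'\<close> and \<open>R\<close> place the same item.
  This is \<open>n\<close> for \<open>R' = R\<close> and at most \<open>n - 1\<close> otherwise.\<close>

lemma zero_one_sum_eq_1E: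
  fixes f :: "'a \<Rightarrow> real"
  assumes "finite A" "\<forall>i\<in>A. f i \<in> {0, 1}" "sum f A = 1"
  obtains k where "k \<in> A" "\<forall>i\<in>A. f i = of_bool (i = k)"
proof -
  have nonneg: "\<And>i. i \<in> A \<Longrightarrow> f i \<ge> 0"
    using assms(2) by auto
  obtain k where k: "k \<in> A" "f k \<noteq> 0"
    using assms(3) by (metis sum.neutral zero_neq_one)
  then have "f k = 1"
    using assms(2) by auto
  moreover have "sum f (A - {k}) = 0"
    using assms(1,3) k(1) \<open>f k = 1\<close> by (simp add: sum.remove)
  then have "\<forall>i\<in>A - {k}. f i = 0"
    using assms(1) nonneg by (subst (asm) sum_nonneg_eq_0_iff) auto
  ultimately show thesis
    using that k(1) by auto
qed

lemma rankings_entry_zero_one: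
  assumes "R \<in> rankings"
  shows "R$i$j \<in> {0, 1}"
  using assms unfolding rankings_def by blast

lemma rankings_column_unit:
  fixes R :: "real^'n::finite^'m::finite"
  assumes "R \<in> rankings"
  shows "\<exists>k. \<forall>i. R$i$j = of_bool (i = k)"
proof -
  have "(\<Sum>i\<in>UNIV. R$i$j) = 1"
    using assms unfolding rankings_def by blast
  then show ?thesis
    using zero_one_sum_eq_1E[of UNIV "\<lambda>i. R$i$j"] rankings_entry_zero_one[OF assms]
    by (metis UNIV_I finite)
qed

lemma rankings_column_overlap:
  fixes R R' :: "real^'n::finite^'m::finite"
  assumes "R \<in> rankings" "R' \<in> rankings"
  shows "(\<Sum>i\<in>UNIV. R'$i$j * R$i$j) = of_bool (\<forall>i. R'$i$j = R$i$j)"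
proof -
  obtain k where k: "\<And>i. R$i$j = of_bool (i = k)"
    using rankings_column_unit[OF assms(1)] by blast
  obtain k' where k': "\<And>i. R'$i$j = of_bool (i = k')"
    using rankings_column_unit[OF assms(2)] by blast
  have "(\<Sum>i\<in>UNIV. R'$i$j * R$i$j) = of_bool (k' = k)"
    by (simp add: k k' of_bool_conj[symmetric] conj_commute)
  also have "(k' = k) \<longleftrightarrow> (\<forall>i. R'$i$j = R$i$j)"
    by (auto simp: k k')
  finally show ?thesis .
qed

lemma mat_inner_rankings:
  fixes R R' :: "real^'n::finite^'m::finite"
  assumes "R \<in> rankings" "R' \<in> rankings"
  shows "mat_inner R' R = real (card {j. \<forall>i. R'$i$j = R$i$j})"
proof -
  have "mat_inner R' R = (\<Sum>j\<in>UNIV. \<Sum>i\<in>UNIV. R'$i$j * R$i$j)"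
    unfolding mat_inner_def by (rule sum.swap)
  also have "\<dots> = (\<Sum>j\<in>UNIV. of_bool (\<forall>i. R'$i$j = R$i$j))"
    using rankings_column_overlap[OF assms] by simp
  finally show ?thesis
    by simp
qed

theorem lemma7p3:
  fixes R :: "real^'n::finite^'m::finite"
  assumes "R \<in> rankings"
  shows "\<exists>W :: real^'n^'m. (\<forall>i j. W$i$j \<ge> 0) \<and>
           (\<forall>R' \<in> rankings. R' \<noteq> R \<longrightarrow>
              mat_inner R' W \<le> mat_inner R W * (1 - 1 / real CARD('n)))"
proof (intro exI conjI allI ballI impI)
  show "R$i$j \<ge> 0" for i j
    using rankings_entry_zero_one[OF assms, of i j] by auto
  fix R' :: "real^'n^'m"
  assume R': "R' \<in> rankings" "R' \<noteq> R"
  let ?agree = "{j. \<forall>i. R'$i$j = R$i$j}"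
  have "?agree \<noteq> UNIV"
    using R'(2) by (auto simp: vec_eq_iff)
  then have "card ?agree < CARD('n)"
    by (simp add: psubsetI psubset_card_mono)
  then have "mat_inner R' R \<le> real CARD('n) - 1"
    using mat_inner_rankings[OF assms R'(1)] by linarith
  also have "\<dots> = mat_inner R R * (1 - 1 / real CARD('n))"
    using mat_inner_rankings[OF assms assms] by (simp add: field_simps)
  finally show "mat_inner R' R \<le> mat_inner R R * (1 - 1 / real CARD('n))" .
qed

end
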